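(* Let $\mathcal H_A$ be a finite-dimensional Hilbert space, $N\ge1$, and let $\mathcal F(A)\subseteq\mathcal D(\mathcal H_A)$ be a convex set of free states, with $N$-partite free states $\mathcal F(A_1\dots A_N)=\mathrm{Conv}\big(\mathcal F(A)\otimes\dots\otimes\mathcal F(A)\big)$ ($N$ factors). Let $\mathcal F'(A)\subseteq\mathcal F(A)$ be affine and let $\Delta'$ be a resource-censoring map for $(\mathcal F(A),\mathcal F'(A))$ satisfying the standing assumptions below, which is moreover entanglement breaking. Then the censorship implemented by $(\Delta')^{\otimes N}$ is unbreakable: there is no $\rho\in\mathcal D(\mathcal H_A^{\otimes N})$ with $\rho\notin\mathcal F(A_1\dots A_N)$ and $(\Delta')^{\otimes N}(\rho)=\rho$. In particular, $\mathrm{Aff}\big(\mathcal F'(A)^{\otimes N}\big)\subseteq\mathrm{Conv}\big(\mathcal F'(A)^{\otimes N}\big)\subseteq\mathcal F(A_1\dots A_N)$.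
   Context: $\mathcal D(\mathcal H)$ denotes the density operators on a finite-dimensional Hilbert space $\mathcal H$. For $S\subseteq\mathcal D(\mathcal H)$, $\mathrm{Aff}(S)=\{\sum_a t_a\sigma_a:\ \text{finitely many }\sigma_a\in S,\ t_a\in\mathbb R,\ \sum_a t_a=1\}\cap\mathcal D(\mathcal H)$ and $\mathrm{Conv}(S)$ is the same with $t_a\ge0$; $S$ is affine if $\mathrm{Aff}(S)=S$ and convex if $\mathrm{Conv}(S)=S$. $S^{\otimes N}=S\otimes\dots\otimes S=\{\rho_1\otimes\dots\otimes\rho_N:\rho_a\in S\}$. A channel is a linear completely positive trace-preserving map. A resource-censoring (RC) map for $(\mathcal F(A),\mathcal F'(A))$ is a channel $\Delta'$ on operators on $\mathcal H_A$ with $\Delta'(\rho)\in\mathcal F(A)$ for all $\rho\in\mathcal D(\mathcal H_A)$ and $\Delta'(\sigma)=\sigma$ for all $\sigma\in\mathcal F'(A)$. Standing assumptions: $\Delta'\circ\Delta'=\Delta'$ and $\mathcal F'(A)$ is exactly the set of density operators fixed by $\Delta'$. $\Delta'$ is entanglement breaking if for every finite-dimensional $\mathcal K$ and every $\rho\in\mathcal D(\mathcal K\otimes\mathcal H_A)$, $(\mathrm{id}_{\mathcal K}\otimes\Delta')(\rho)\in\mathrm{Conv}(\mathcal D(\mathcal K)\otimes\mathcal D(\mathcal H_A))$. *)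

theory Defs
  imports Complex_Main "HOL-Library.FuncSet"
begin

text \<open>Operators on a finite-dimensional Hilbert space with orthonormal basis indexed by a
finite set I are represented as functions I x I -> complex (matrix entries), vanishing
outside I x I.\<close>

type_synonym 'i op = "'i \<Rightarrow> 'i \<Rightarrow> complex"

definition supp_on :: "'i set \<Rightarrow> 'i op \<Rightarrow> bool" where
  "supp_on I \<rho> \<longleftrightarrow> (\<forall>i j. i \<notin> I \<or> j \<notin> I \<longrightarrow> \<rho> i j = 0)"

definition qform :: "'i set \<Rightarrow> 'i op \<Rightarrow> ('i \<Rightarrow> complex) \<Rightarrow> complex" where
  "qform I \<rho> v = (\<Sum>i\<in>I. \<Sum>j\<in>I. cnj (v i) * \<rho> i j * v j)"

definition psd_on :: "'i set \<Rightarrow> 'i op \<Rightarrow> bool" where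
  "psd_on I \<rho> \<longleftrightarrow> supp_on I \<rho> \<and> (\<forall>v. Im (qform I \<rho> v) = 0 \<and> Re (qform I \<rho> v) \<ge> 0)"

definition trace_on :: "'i set \<Rightarrow> 'i op \<Rightarrow> complex" where
  "trace_on I \<rho> = (\<Sum>i\<in>I. \<rho> i i)"

definition dens :: "'i set \<Rightarrow> 'i op set" where
  "dens I = {\<rho>. psd_on I \<rho> \<and> trace_on I \<rho> = 1}"

definition lin_comb :: "'i op set \<Rightarrow> ('i op \<Rightarrow> real) \<Rightarrow> 'i op" where
  "lin_comb F t = (\<lambda>i j. \<Sum>\<sigma>\<in>F. complex_of_real (t \<sigma>) * \<sigma> i j)"

definition Aff :: "'i set \<Rightarrow> 'i op set \<Rightarrow> 'i op set" where
  "Aff I S = {\<rho>. \<exists>F t. finite F \<and> F \<subseteq> S \<and> sum t F = 1 \<and> \<rho> = lin_comb F t} \<inter> dens I"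

definition Conv :: "'i set \<Rightarrow> 'i op set \<Rightarrow> 'i op set" where
  "Conv I S = {\<rho>. \<exists>F t. finite F \<and> F \<subseteq> S \<and> (\<forall>\<sigma>\<in>F. t \<sigma> \<ge> 0) \<and> sum t F = 1
                   \<and> \<rho> = lin_comb F t} \<inter> dens I"

text \<open>N-fold tensor product H_A^{\<otimes>N}: basis indexed by functions {..<N} -> 'a (extensional).\<close>
definition IN :: "nat \<Rightarrow> (nat \<Rightarrow> 'a) set" where
  "IN N = PiE {..<N} (\<lambda>_. UNIV)"

definition tensor :: "nat \<Rightarrow> (nat \<Rightarrow> 'a op) \<Rightarrow> (nat \<Rightarrow> 'a) op" where
  "tensor N \<rho>s = (\<lambda>i j. if i \<in> IN N \<and> j \<in> IN N then \<Prod>a<N. \<rho>s a (i a) (j a) else 0)"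

definition tensor_set :: "nat \<Rightarrow> 'a op set \<Rightarrow> (nat \<Rightarrow> 'a) op set" where
  "tensor_set N S = {tensor N \<rho>s | \<rho>s. \<forall>a<N. \<rho>s a \<in> S}"

definition unit_op :: "'a \<Rightarrow> 'a \<Rightarrow> 'a op" where
  "unit_op k l = (\<lambda>x y. if x = k \<and> y = l then 1 else 0)"

text \<open>The tensor power \<Phi>^{\<otimes>N} of a linear map \<Phi>, defined on matrix units.\<close>
definition tpow :: "nat \<Rightarrow> ('a op \<Rightarrow> 'a op) \<Rightarrow> (nat \<Rightarrow> 'a) op \<Rightarrow> (nat \<Rightarrow> 'a) op" where
  "tpow N \<Phi> \<rho> = (\<lambda>i j. \<Sum>k\<in>IN N. \<Sum>l\<in>IN N.
       \<rho> k l * tensor N (\<lambda>a. \<Phi> (unit_op (k a) (l a))) i j)"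

text \<open>id_K \<otimes> \<Phi> for K = C^m (basis {..<m}), acting blockwise.\<close>
definition id_tensor :: "nat \<Rightarrow> ('a op \<Rightarrow> 'a op) \<Rightarrow> (nat \<times> 'a) op \<Rightarrow> (nat \<times> 'a) op" where
  "id_tensor m \<Phi> \<rho> = (\<lambda>(k, x) (l, y).
       if k < m \<and> l < m then \<Phi> (\<lambda>x' y'. \<rho> (k, x') (l, y')) x y else 0)"

definition channel :: "('a::finite op \<Rightarrow> 'a op) \<Rightarrow> bool" where
  "channel \<Phi> \<longleftrightarrow>
     (\<forall>\<rho> \<sigma>. \<Phi> (\<lambda>i j. \<rho> i j + \<sigma> i j) = (\<lambda>i j. \<Phi> \<rho> i j + \<Phi> \<sigma> i j)) \<and>
     (\<forall>c \<rho>. \<Phi> (\<lambda>i j. c * \<rho> i j) = (\<lambda>i j. c * \<Phi> \<rho> i j)) \<and>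
     (\<forall>m \<rho>. psd_on ({..<m} \<times> UNIV) \<rho> \<longrightarrow> psd_on ({..<m} \<times> UNIV) (id_tensor m \<Phi> \<rho>)) \<and>
     (\<forall>\<rho>. trace_on UNIV (\<Phi> \<rho>) = trace_on UNIV \<rho>)"

definition RC_map :: "'a::finite op set \<Rightarrow> 'a op set \<Rightarrow> ('a op \<Rightarrow> 'a op) \<Rightarrow> bool" where
  "RC_map F F' \<Delta> \<longleftrightarrow> channel \<Delta> \<and> (\<forall>\<rho>\<in>dens UNIV. \<Delta> \<rho> \<in> F) \<and> (\<forall>\<sigma>\<in>F'. \<Delta> \<sigma> = \<sigma>)"

definition prod_states :: "nat \<Rightarrow> (nat \<times> 'a::finite) op set" where
  "prod_states m = {(\<lambda>(k, x) (l, y). \<sigma> k l * \<tau> x y) | \<sigma> \<tau>.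
                      \<sigma> \<in> dens {..<m} \<and> \<tau> \<in> dens UNIV}"

definition entanglement_breaking :: "('a::finite op \<Rightarrow> 'a op) \<Rightarrow> bool" where
  "entanglement_breaking \<Phi> \<longleftrightarrow>
     (\<forall>m \<rho>. \<rho> \<in> dens ({..<m} \<times> UNIV) \<longrightarrow>
        id_tensor m \<Phi> \<rho> \<in> Conv ({..<m} \<times> UNIV) (prod_states m))"

end

theory Submission
  imports Defs
begin

text \<open>
  By induction on N, \<Delta>^\<otimes>N maps every state into the convex hull of products of states from
  \<Delta>(D(H_A)). For N + 1 factors, view \<rho> as a bipartite state on H_A^\<otimes>N \<otimes> H_A: since \<Delta> is
  entanglement breaking, (id \<otimes> \<Delta>) \<rho> = \<Sum>_g t_g \<sigma>_g \<otimes> \<tau>_g, and idempotence of \<Delta> gives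
  \<Delta>^\<otimes>(N+1) \<rho> = \<Sum>_g t_g \<Delta>^\<otimes>N \<sigma>_g \<otimes> \<Delta> \<tau>_g, to which the induction hypothesis applies.
  As \<Delta>(D(H_A)) \<subseteq> F', every fixed point of \<Delta>^\<otimes>N lies in Conv(F'^\<otimes>N) \<subseteq> Conv(F^\<otimes>N), and
  every affine combination of elements of F'^\<otimes>N is such a fixed point.
\<close>

lemma channel_add:
  "channel \<Delta> \<Longrightarrow> \<Delta> (\<lambda>i j. \<rho> i j + \<sigma> i j) = (\<lambda>i j. \<Delta> \<rho> i j + \<Delta> \<sigma> i j)"
  unfolding channel_def by blast

lemma channel_scale:
  "channel \<Delta> \<Longrightarrow> \<Delta> (\<lambda>i j. c * \<rho> i j) = (\<lambda>i j. c * \<Delta> \<rho> i j)"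
  unfolding channel_def by blast

lemma channel_zero: "channel \<Delta> \<Longrightarrow> \<Delta> (\<lambda>i j. 0) = (\<lambda>i j. 0)"
  using channel_scale[of \<Delta> 0 "\<lambda>i j. 0"] by simp

lemma channel_sum:
  assumes "channel \<Delta>" "finite S"
  shows "\<Delta> (\<lambda>i j. \<Sum>s\<in>S. c s * f s i j) = (\<lambda>i j. \<Sum>s\<in>S. c s * \<Delta> (f s) i j)"
  using assms(2)
proof (induction S rule: finite_induct)
  case empty
  show ?case using channel_zero[OF assms(1)] by simp
next
  case (insert s S)
  then show ?case
    using channel_add[OF assms(1), of "\<lambda>i j. c s * f s i j" "\<lambda>i j. \<Sum>s\<in>S. c s * f s i j"]
    by (simp add: channel_scale[OF assms(1)])
qed

lemma channel_matrix_units: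
  fixes \<Delta> :: "'a::finite op \<Rightarrow> 'a op"
  assumes "channel \<Delta>"
  shows "\<Delta> X i j = (\<Sum>x\<in>UNIV. \<Sum>y\<in>UNIV. X x y * \<Delta> (unit_op x y) i j)"
proof -
  have "X = (\<lambda>i j. \<Sum>(x, y)\<in>UNIV. X x y * unit_op x y i j)"
  proof (intro ext)
    fix i j
    have "(\<Sum>(x, y)\<in>UNIV. X x y * unit_op x y i j) = (\<Sum>p\<in>UNIV. if p = (i, j) then X i j else 0)"
      by (intro sum.cong) (auto simp: unit_op_def split: if_splits)
    then show "X i j = (\<Sum>(x, y)\<in>UNIV. X x y * unit_op x y i j)" by simp
  qed
  then have "\<Delta> X i j = (\<Sum>(x, y)\<in>UNIV. X x y * \<Delta> (unit_op x y) i j)"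
    using channel_sum[OF assms finite_UNIV, of "\<lambda>(x, y). X x y" "\<lambda>(x, y). unit_op x y"]
    by (simp add: case_prod_beta)
  then show ?thesis
    by (simp add: UNIV_Times_UNIV[symmetric] sum.cartesian_product del: UNIV_Times_UNIV)
qed

lemma mem_IN_iff: "k \<in> IN N \<longleftrightarrow> (\<forall>a\<ge>N. k a = undefined)"
  by (auto simp: IN_def PiE_iff extensional_def)

lemma finite_IN: "finite (IN N :: (nat \<Rightarrow> 'a::finite) set)"
  unfolding IN_def by (intro finite_PiE) auto

lemma IN_0: "IN 0 = {\<lambda>_. undefined}"
  by (auto simp: mem_IN_iff)

lemma fun_upd_mem_IN_Suc: "k \<in> IN N \<Longrightarrow> k(N := x) \<in> IN (Suc N)"
  by (auto simp: mem_IN_iff)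

lemma fun_upd_undefined_mem_IN: "i \<in> IN (Suc N) \<Longrightarrow> i(N := undefined) \<in> IN N"
  by (auto simp: mem_IN_iff)

lemma bij_betw_fun_upd_IN: "bij_betw (\<lambda>(k, x). k(N := x)) (IN N \<times> UNIV) (IN (Suc N))"
proof (rule bij_betw_byWitness[where f' = "\<lambda>i. (i(N := undefined), i N)"])
  show "\<forall>p\<in>IN N \<times> UNIV. (\<lambda>i. (i(N := undefined), i N)) ((\<lambda>(k, x). k(N := x)) p) = p"
    by (auto simp: mem_IN_iff fun_eq_iff)
qed (auto simp: mem_IN_iff)

lemma dens_reindex:
  assumes g: "bij_betw g J I" and \<rho>: "\<rho> \<in> dens I" and supp: "supp_on J \<rho>'"
    and eq: "\<And>a b. a \<in> J \<Longrightarrow> b \<in> J \<Longrightarrow> \<rho>' a b = \<rho> (g a) (g b)"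
  shows "\<rho>' \<in> dens J"
proof -
  have inv: "inv_into J g (g a) = a" if "a \<in> J" for a
    using g that by (simp add: bij_betw_def inv_into_f_f)
  have "qform J \<rho>' v = qform I \<rho> (\<lambda>i. v (inv_into J g i))" for v
    unfolding qform_def sum.reindex_bij_betw[OF g, symmetric]
    by (intro sum.cong refl) (simp add: inv eq)
  moreover have "trace_on J \<rho>' = trace_on I \<rho>"
    unfolding trace_on_def sum.reindex_bij_betw[OF g, symmetric] by (simp add: eq)
  ultimately show ?thesis
    using \<rho> supp unfolding dens_def psd_on_def by simp
qed

definition in_conv_hull :: "'i op set \<Rightarrow> 'i op \<Rightarrow> bool" where
  "in_conv_hull S \<rho> \<longleftrightarrow>
     (\<exists>F t. finite F \<and> F \<subseteq> S \<and> (\<forall>\<sigma>\<in>F. t \<sigma> \<ge> 0) \<and> sum t F = 1 \<and> \<rho> = lin_comb F t)"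

lemma Conv_eq: "Conv I S = {\<rho> \<in> dens I. in_conv_hull S \<rho>}"
  unfolding Conv_def in_conv_hull_def by blast

lemma in_conv_hull_mono: "in_conv_hull S \<rho> \<Longrightarrow> S \<subseteq> T \<Longrightarrow> in_conv_hull T \<rho>"
  unfolding in_conv_hull_def by blast

lemma in_conv_hull_sum:
  assumes "finite X" "f ` X \<subseteq> S" "\<forall>x\<in>X. w x \<ge> 0" "sum w X = 1"
  shows "in_conv_hull S (\<lambda>i j. \<Sum>x\<in>X. complex_of_real (w x) * f x i j)"
  unfolding in_conv_hull_def
proof (intro exI conjI)
  define t where "t \<sigma> = sum w {x\<in>X. f x = \<sigma>}" for \<sigma>
  show "finite (f ` X)" "f ` X \<subseteq> S"
    using assms by simp_all
  show "\<forall>\<sigma>\<in>f ` X. t \<sigma> \<ge> 0"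
    using assms(3) by (auto simp: t_def intro: sum_nonneg)
  show "sum t (f ` X) = 1"
    using sum.image_gen[OF assms(1), of w f] assms(4) by (simp add: t_def)
  have "(\<Sum>x\<in>X. complex_of_real (w x) * f x i j) = lin_comb (f ` X) t i j" for i j
    unfolding sum.image_gen[OF assms(1), of "\<lambda>x. complex_of_real (w x) * f x i j" f]
    unfolding lin_comb_def t_def of_real_sum sum_distrib_right
    by (intro sum.cong refl) auto
  then show "(\<lambda>i j. \<Sum>x\<in>X. complex_of_real (w x) * f x i j) = lin_comb (f ` X) t"
    by (intro ext)
qed

lemma in_conv_hull_self: "\<sigma> \<in> S \<Longrightarrow> in_conv_hull S \<sigma>"
  using in_conv_hull_sum[of "{\<sigma>}" "\<lambda>x. x" S "\<lambda>_. 1"] by simp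

lemma in_conv_hull_convex_sum:
  assumes G: "finite G" "\<forall>g\<in>G. t g \<ge> 0" "sum t G = 1"
    and A: "\<forall>g\<in>G. in_conv_hull S (A g)"
  shows "in_conv_hull S (\<lambda>i j. \<Sum>g\<in>G. complex_of_real (t g) * A g i j)"
proof -
  obtain F s where F: "\<And>g. g \<in> G \<Longrightarrow> finite (F g) \<and> F g \<subseteq> S \<and> (\<forall>\<sigma>\<in>F g. s g \<sigma> \<ge> 0)
      \<and> sum (s g) (F g) = 1 \<and> A g = lin_comb (F g) (s g)"
    using A unfolding in_conv_hull_def by metis
  define w where "w = (\<lambda>(g, \<sigma>). t g * s g \<sigma>)"
  have "in_conv_hull S (\<lambda>i j. \<Sum>p\<in>Sigma G F. complex_of_real (w p) * snd p i j)"
  proof (rule in_conv_hull_sum)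
    have "sum w (Sigma G F) = (\<Sum>g\<in>G. \<Sum>\<sigma>\<in>F g. t g * s g \<sigma>)"
      using G F by (simp add: w_def sum.Sigma[symmetric])
    also have "\<dots> = (\<Sum>g\<in>G. t g * sum (s g) (F g))"
      by (simp add: sum_distrib_left)
    finally show "sum w (Sigma G F) = 1"
      using G F by simp
  qed (use G F in \<open>force simp: w_def\<close>)+
  moreover have "(\<Sum>p\<in>Sigma G F. complex_of_real (w p) * snd p i j)
      = (\<Sum>g\<in>G. complex_of_real (t g) * A g i j)" for i j
  proof -
    have "(\<Sum>p\<in>Sigma G F. complex_of_real (w p) * snd p i j)
        = (\<Sum>g\<in>G. \<Sum>\<sigma>\<in>F g. complex_of_real (t g * s g \<sigma>) * \<sigma> i j)"
      using G F by (subst sum.Sigma) (auto simp: w_def split_def)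
    also have "\<dots> = (\<Sum>g\<in>G. complex_of_real (t g) * A g i j)"
      using F by (intro sum.cong refl) (simp add: lin_comb_def sum_distrib_left mult_ac)
    finally show ?thesis .
  qed
  ultimately show ?thesis by simp
qed

text \<open>\<open>tensor_snoc N A B\<close> is A \<otimes> B under H_A^\<otimes>N \<otimes> H_A \<cong> H_A^\<otimes>(N+1), and
  \<open>last_block N \<rho> k l\<close> is the (k, l) block of \<rho> under the same identification.\<close>

definition tensor_snoc :: "nat \<Rightarrow> (nat \<Rightarrow> 'a) op \<Rightarrow> 'a op \<Rightarrow> (nat \<Rightarrow> 'a) op" where
  "tensor_snoc N A B = (\<lambda>i j. if i \<in> IN (Suc N) \<and> j \<in> IN (Suc N)
     then A (i(N := undefined)) (j(N := undefined)) * B (i N) (j N) else 0)"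

definition last_block :: "nat \<Rightarrow> (nat \<Rightarrow> 'a) op \<Rightarrow> (nat \<Rightarrow> 'a) \<Rightarrow> (nat \<Rightarrow> 'a) \<Rightarrow> 'a op" where
  "last_block N \<rho> k l = (\<lambda>x y. \<rho> (k(N := x)) (l(N := y)))"

lemma prod_lessThan_fun_upd:
  "(\<Prod>a<(N::nat). f a ((i(N := x)) a) ((j(N := y)) a)) = (\<Prod>a<N. f a (i a) (j a))"
  by (intro prod.cong refl) auto

lemma tensor_Suc: "tensor (Suc N) \<sigma>s = tensor_snoc N (tensor N \<sigma>s) (\<sigma>s N)"
proof (intro ext)
  fix i j :: "nat \<Rightarrow> 'a"
  show "tensor (Suc N) \<sigma>s i j = tensor_snoc N (tensor N \<sigma>s) (\<sigma>s N) i j"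
    using prod_lessThan_fun_upd[where f = \<sigma>s and N = N and i = i and j = j and x = undefined and y = undefined]
    by (simp add: tensor_def tensor_snoc_def fun_upd_undefined_mem_IN prod.lessThan_Suc
        del: fun_upd_apply)
qed

lemma tensor_fun_upd_beyond: "tensor N (\<sigma>s(N := \<tau>)) = tensor N \<sigma>s"
  unfolding tensor_def by (intro ext prod.cong if_cong refl) auto

lemma tensor_set_mono: "S \<subseteq> T \<Longrightarrow> tensor_set N S \<subseteq> tensor_set N T"
  unfolding tensor_set_def by blast

lemma tensor_snoc_mem_tensor_set:
  assumes "A \<in> tensor_set N S" "B \<in> S"
  shows "tensor_snoc N A B \<in> tensor_set (Suc N) S"
proof -
  obtain \<sigma>s where A: "A = tensor N \<sigma>s" and \<sigma>s: "\<forall>a<N. \<sigma>s a \<in> S"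
    using assms(1) unfolding tensor_set_def by blast
  have "tensor_snoc N A B = tensor (Suc N) (\<sigma>s(N := B))"
    by (simp add: A tensor_Suc tensor_fun_upd_beyond)
  moreover have "\<forall>a<Suc N. (\<sigma>s(N := B)) a \<in> S"
    using \<sigma>s assms(2) by (simp add: less_Suc_eq)
  ultimately show ?thesis
    unfolding tensor_set_def by blast
qed

lemma in_conv_hull_tensor_snoc:
  assumes "in_conv_hull (tensor_set N S) A" "B \<in> S"
  shows "in_conv_hull (tensor_set (Suc N) S) (tensor_snoc N A B)"
proof -
  obtain F t where F: "finite F" "F \<subseteq> tensor_set N S" "\<forall>\<sigma>\<in>F. t \<sigma> \<ge> 0" "sum t F = 1"
    and A: "A = lin_comb F t"
    using assms(1) unfolding in_conv_hull_def by blast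
  have "tensor_snoc N A B = (\<lambda>i j. \<Sum>\<sigma>\<in>F. complex_of_real (t \<sigma>) * tensor_snoc N \<sigma> B i j)"
    by (intro ext) (auto simp: A tensor_snoc_def lin_comb_def sum_distrib_left sum_distrib_right mult_ac)
  moreover have "(\<lambda>\<sigma>. tensor_snoc N \<sigma> B) ` F \<subseteq> tensor_set (Suc N) S"
    using F(2) assms(2) tensor_snoc_mem_tensor_set by blast
  ultimately show ?thesis
    using in_conv_hull_sum[OF F(1)] F(3,4) by simp
qed

lemma last_block_tensor_snoc:
  "k \<in> IN N \<Longrightarrow> l \<in> IN N \<Longrightarrow> last_block N (tensor_snoc N A B) k l = (\<lambda>x y. A k l * B x y)"
  by (intro ext) (simp add: last_block_def tensor_snoc_def fun_upd_mem_IN_Suc mem_IN_iff fun_upd_idem)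

lemma tpow_sum:
  "finite G \<Longrightarrow> tpow N \<Phi> (\<lambda>k l. \<Sum>g\<in>G. c g * X g k l) = (\<lambda>i j. \<Sum>g\<in>G. c g * tpow N \<Phi> (X g) i j)"
  unfolding tpow_def
  by (intro ext) (simp add: sum_distrib_left sum_distrib_right mult_ac sum.swap[of _ G])

lemma tpow_scale: "tpow N \<Phi> (\<lambda>k l. c * X k l) = (\<lambda>i j. c * tpow N \<Phi> X i j)"
  unfolding tpow_def by (simp add: sum_distrib_left mult_ac)

lemma tpow_cong:
  "(\<And>k l. k \<in> IN N \<Longrightarrow> l \<in> IN N \<Longrightarrow> \<rho> k l = \<rho>' k l) \<Longrightarrow> tpow N \<Phi> \<rho> = tpow N \<Phi> \<rho>'"
  unfolding tpow_def by (intro ext sum.cong refl) simp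

lemma tpow_outside: "\<not> (i \<in> IN N \<and> j \<in> IN N) \<Longrightarrow> tpow N \<Phi> \<rho> i j = 0"
  by (auto simp: tpow_def tensor_def)

lemma tpow_Suc:
  fixes \<Delta> :: "'a::finite op \<Rightarrow> 'a op"
  assumes c: "channel \<Delta>" and i: "i \<in> IN (Suc N)" and j: "j \<in> IN (Suc N)"
  shows "tpow (Suc N) \<Delta> \<rho> i j =
    tpow N \<Delta> (\<lambda>k l. \<Delta> (last_block N \<rho> k l) (i N) (j N)) (i(N := undefined)) (j(N := undefined))"
proof -
  define P where "P k l = (\<Prod>a<N. \<Delta> (unit_op (k a) (l a)) (i a) (j a))" for k l :: "nat \<Rightarrow> 'a"
  have P_fun_upd: "(\<Prod>a<N. \<Delta> (unit_op ((k(N := x)) a) ((l(N := y)) a)) (i a) (j a)) = P k l" for k l x y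
    unfolding P_def by (rule prod_lessThan_fun_upd)
  have P_restrict: "(\<Prod>a<N. \<Delta> (unit_op (k a) (l a)) ((i(N := undefined)) a) ((j(N := undefined)) a))
      = P k l" for k l
    unfolding P_def by (rule prod_lessThan_fun_upd)
  have block: "\<Delta> (last_block N \<rho> k l) (i N) (j N)
      = (\<Sum>x\<in>UNIV. \<Sum>y\<in>UNIV. \<rho> (k(N := x)) (l(N := y)) * \<Delta> (unit_op x y) (i N) (j N))" for k l
    unfolding last_block_def by (rule channel_matrix_units[OF c])
  have "tpow (Suc N) \<Delta> \<rho> i j = (\<Sum>k'\<in>IN (Suc N). \<Sum>l'\<in>IN (Suc N).
      \<rho> k' l' * (\<Prod>a<Suc N. \<Delta> (unit_op (k' a) (l' a)) (i a) (j a)))"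
    by (simp add: tpow_def tensor_def i j)
  also have "\<dots> = (\<Sum>(k, x)\<in>IN N \<times> UNIV. \<Sum>(l, y)\<in>IN N \<times> UNIV.
      \<rho> (k(N := x)) (l(N := y)) * (P k l * \<Delta> (unit_op x y) (i N) (j N)))"
    by (simp add: sum.reindex_bij_betw[OF bij_betw_fun_upd_IN, symmetric] prod.lessThan_Suc
        case_prod_beta P_fun_upd fun_upd_same del: fun_upd_apply)
  also have "\<dots> = (\<Sum>k\<in>IN N. \<Sum>l\<in>IN N. P k l *
      (\<Sum>x\<in>UNIV. \<Sum>y\<in>UNIV. \<rho> (k(N := x)) (l(N := y)) * \<Delta> (unit_op x y) (i N) (j N)))"
    unfolding sum.cartesian_product[symmetric]
    by (intro sum.cong refl, subst sum.swap) (simp add: sum_distrib_left mult_ac)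
  also have "\<dots> = tpow N \<Delta> (\<lambda>k l. \<Delta> (last_block N \<rho> k l) (i N) (j N)) (i(N := undefined)) (j(N := undefined))"
    by (simp add: tpow_def tensor_def fun_upd_undefined_mem_IN i j block P_restrict mult_ac
        del: fun_upd_apply)
  finally show ?thesis .
qed
lemma tpow_Suc_eq_sum_tensor_snoc:
  fixes \<Delta> :: "'a::finite op \<Rightarrow> 'a op"
  assumes c: "channel \<Delta>" and G: "finite G"
    and block: "\<And>k l. k \<in> IN N \<Longrightarrow> l \<in> IN N \<Longrightarrow>
      \<Delta> (last_block N \<rho> k l) = (\<lambda>x y. \<Sum>g\<in>G. c g * \<sigma> g k l * \<tau> g x y)"
  shows "tpow (Suc N) \<Delta> \<rho> = (\<lambda>i j. \<Sum>g\<in>G. c g * tensor_snoc N (tpow N \<Delta> (\<sigma> g)) (\<tau> g) i j)"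
proof (intro ext)
  fix i j
  show "tpow (Suc N) \<Delta> \<rho> i j = (\<Sum>g\<in>G. c g * tensor_snoc N (tpow N \<Delta> (\<sigma> g)) (\<tau> g) i j)"
  proof (cases "i \<in> IN (Suc N) \<and> j \<in> IN (Suc N)")
    case True
    have "tpow N \<Delta> (\<lambda>k l. \<Delta> (last_block N \<rho> k l) (i N) (j N))
        = tpow N \<Delta> (\<lambda>k l. \<Sum>g\<in>G. c g * (\<tau> g (i N) (j N) * \<sigma> g k l))"
      by (rule tpow_cong) (simp add: block mult_ac)
    then show ?thesis
      using True by (simp add: tpow_Suc[OF c] tpow_sum[OF G] tpow_scale tensor_snoc_def) (simp add: mult_ac)
  next
    case False
    then show ?thesis by (auto simp: tpow_outside tensor_snoc_def)
  qed
qed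

lemma tpow_tensor:
  fixes \<Delta> :: "'a::finite op \<Rightarrow> 'a op"
  assumes c: "channel \<Delta>"
  shows "tpow N \<Delta> (tensor N \<sigma>s) = tensor N (\<lambda>a. \<Delta> (\<sigma>s a))"
proof (induction N)
  case 0
  show ?case by (intro ext) (simp add: tpow_def tensor_def IN_0)
next
  case (Suc N)
  have "tpow (Suc N) \<Delta> (tensor (Suc N) \<sigma>s)
      = (\<lambda>i j. \<Sum>g\<in>{()}. 1 * tensor_snoc N (tpow N \<Delta> (tensor N \<sigma>s)) (\<Delta> (\<sigma>s N)) i j)"
  proof (rule tpow_Suc_eq_sum_tensor_snoc[OF c])
    show "\<Delta> (last_block N (tensor (Suc N) \<sigma>s) k l)
        = (\<lambda>x y. \<Sum>g\<in>{()}. 1 * tensor N \<sigma>s k l * \<Delta> (\<sigma>s N) x y)"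
      if "k \<in> IN N" "l \<in> IN N" for k l
      using that by (simp add: tensor_Suc last_block_tensor_snoc channel_scale[OF c])
  qed simp
  then show ?case
    by (simp add: Suc.IH tensor_Suc[of N "\<lambda>a. \<Delta> (\<sigma>s a)"])
qed

lemma tpow_lin_comb_fixed:
  assumes "finite G" "\<forall>g\<in>G. tpow N \<Phi> g = g"
  shows "tpow N \<Phi> (lin_comb G t) = lin_comb G t"
  using assms unfolding lin_comb_def by (simp add: tpow_sum)

lemma entanglement_breaking_decomposition:
  fixes \<Delta> :: "'a::finite op \<Rightarrow> 'a op" and m :: nat
  assumes "entanglement_breaking \<Delta>" and "\<rho> \<in> dens ({..<m} \<times> UNIV)"
  obtains G :: "(nat \<times> 'a) op set" and t \<sigma> \<tau>
  where "finite G" "\<forall>g\<in>G. t g \<ge> 0" "sum t G = 1"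
    and "\<forall>g\<in>G. \<sigma> g \<in> dens {..<m}" "\<forall>g\<in>G. \<tau> g \<in> dens UNIV"
    and "\<And>p q. p < m \<Longrightarrow> q < m \<Longrightarrow>
      \<Delta> (\<lambda>x y. \<rho> (p, x) (q, y)) = (\<lambda>x y. \<Sum>g\<in>G. complex_of_real (t g) * \<sigma> g p q * \<tau> g x y)"
proof -
  have "id_tensor m \<Delta> \<rho> \<in> Conv ({..<m} \<times> UNIV) (prod_states m)"
    using assms(1)[unfolded entanglement_breaking_def, rule_format, OF assms(2)] .
  then obtain G t where G: "finite G" "G \<subseteq> prod_states m" "\<forall>g\<in>G. t g \<ge> 0" "sum t G = 1"
    and decomp: "id_tensor m \<Delta> \<rho> = lin_comb G t"
    unfolding Conv_def by blast
  have "\<forall>g\<in>G. \<exists>\<sigma> \<tau>. \<sigma> \<in> dens {..<m} \<and> \<tau> \<in> dens UNIV \<and> g = (\<lambda>(k, x) (l, y). \<sigma> k l * \<tau> x y)"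
    using G(2) unfolding prod_states_def by force
  then obtain \<sigma> \<tau> where \<sigma>\<tau>: "\<forall>g\<in>G. \<sigma> g \<in> dens {..<m} \<and> \<tau> g \<in> dens UNIV
      \<and> g = (\<lambda>(k, x) (l, y). \<sigma> g k l * \<tau> g x y)"
    by metis
  show thesis
  proof (rule that[OF G(1,3,4)])
    show "\<forall>g\<in>G. \<sigma> g \<in> dens {..<m}" "\<forall>g\<in>G. \<tau> g \<in> dens UNIV"
      using \<sigma>\<tau> by simp_all
    fix p q assume "p < m" "q < m"
    then have "\<Delta> (\<lambda>x y. \<rho> (p, x) (q, y)) = (\<lambda>x y. id_tensor m \<Delta> \<rho> (p, x) (q, y))"
      by (simp add: id_tensor_def)
    also have "\<dots> = (\<lambda>x y. \<Sum>g\<in>G. complex_of_real (t g) * \<sigma> g p q * \<tau> g x y)"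
      unfolding decomp lin_comb_def
      by (intro ext sum.cong refl) (subst (2) \<sigma>\<tau>, simp_all add: mult.assoc)
    finally show "\<Delta> (\<lambda>x y. \<rho> (p, x) (q, y))
        = (\<lambda>x y. \<Sum>g\<in>G. complex_of_real (t g) * \<sigma> g p q * \<tau> g x y)" .
  qed
qed

lemma entanglement_breaking_last_factor:
  fixes \<Delta> :: "'a::finite op \<Rightarrow> 'a op"
  assumes eb: "entanglement_breaking \<Delta>" and \<rho>: "\<rho> \<in> dens (IN (Suc N))"
  obtains G :: "(nat \<times> 'a) op set" and t \<sigma> \<tau>
  where "finite G" "\<forall>g\<in>G. t g \<ge> 0" "sum t G = 1"
    and "\<forall>g\<in>G. \<sigma> g \<in> dens (IN N)" "\<forall>g\<in>G. \<tau> g \<in> dens UNIV"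
    and "\<And>k l. k \<in> IN N \<Longrightarrow> l \<in> IN N \<Longrightarrow>
      \<Delta> (last_block N \<rho> k l) = (\<lambda>x y. \<Sum>g\<in>G. complex_of_real (t g) * \<sigma> g k l * \<tau> g x y)"
proof -
  \<comment> \<open>Entanglement breaking is stated for C^m \<otimes> H_A, so H_A^\<otimes>N is relabelled as C^m.\<close>
  define m where "m = card (IN N :: (nat \<Rightarrow> 'a) set)"
  obtain enc :: "(nat \<Rightarrow> 'a) \<Rightarrow> nat" where enc: "bij_betw enc (IN N) {..<m}"
    using ex_bij_betw_finite_nat[OF finite_IN] unfolding m_def atLeast0LessThan by blast
  define dec where "dec = inv_into (IN N) enc"
  have dec: "bij_betw dec {..<m} (IN N)"
    unfolding dec_def by (rule bij_betw_inv_into[OF enc])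
  have dec_enc: "dec (enc k) = k" and enc_less: "enc k < m" if "k \<in> IN N" for k
    using bij_betw_inv_into_left[OF enc that] enc that by (auto simp: dec_def bij_betw_def)
  define \<rho>' :: "(nat \<times> 'a) op" where
    "\<rho>' = (\<lambda>(p, x) (q, y). if p < m \<and> q < m then \<rho> ((dec p)(N := x)) ((dec q)(N := y)) else 0)"
  have "bij_betw ((\<lambda>(k, x). k(N := x)) \<circ> map_prod dec id) ({..<m} \<times> UNIV) (IN (Suc N))"
    by (rule bij_betw_trans[OF bij_betw_map_prod[OF dec bij_betw_id] bij_betw_fun_upd_IN])
  then have \<rho>': "\<rho>' \<in> dens ({..<m} \<times> UNIV)"
    by (rule dens_reindex[OF _ \<rho>]) (auto simp: supp_on_def \<rho>'_def)
  obtain G :: "(nat \<times> 'a) op set" and t \<sigma>\<^sub>0 \<tau> where G: "finite G" "\<forall>g\<in>G. t g \<ge> 0" "sum t G = 1"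
    and \<sigma>\<^sub>0: "\<forall>g\<in>G. \<sigma>\<^sub>0 g \<in> dens {..<m}" and \<tau>: "\<forall>g\<in>G. \<tau> g \<in> dens UNIV"
    and decomp: "\<And>p q. p < m \<Longrightarrow> q < m \<Longrightarrow>
      \<Delta> (\<lambda>x y. \<rho>' (p, x) (q, y)) = (\<lambda>x y. \<Sum>g\<in>G. complex_of_real (t g) * \<sigma>\<^sub>0 g p q * \<tau> g x y)"
    by (elim entanglement_breaking_decomposition[OF eb \<rho>'])
  define \<sigma> where "\<sigma> g = (\<lambda>k l. if k \<in> IN N \<and> l \<in> IN N then \<sigma>\<^sub>0 g (enc k) (enc l) else 0)" for g
  show thesis
  proof (rule that[OF G _ \<tau>])
    show "\<forall>g\<in>G. \<sigma> g \<in> dens (IN N)"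
      using \<sigma>\<^sub>0 by (auto intro!: dens_reindex[OF enc] simp: supp_on_def \<sigma>_def)
    fix k l :: "nat \<Rightarrow> 'a" assume "k \<in> IN N" "l \<in> IN N"
    then have "last_block N \<rho> k l = (\<lambda>x y. \<rho>' (enc k, x) (enc l, y))"
      by (simp add: last_block_def \<rho>'_def dec_enc enc_less)
    then show "\<Delta> (last_block N \<rho> k l)
        = (\<lambda>x y. \<Sum>g\<in>G. complex_of_real (t g) * \<sigma> g k l * \<tau> g x y)"
      using \<open>k \<in> IN N\<close> \<open>l \<in> IN N\<close> by (simp add: decomp enc_less \<sigma>_def)
  qed
qed

lemma tpow_in_conv_hull_tensor_set:
  fixes \<Delta> :: "'a::finite op \<Rightarrow> 'a op"
  assumes c: "channel \<Delta>" and eb: "entanglement_breaking \<Delta>" and idem: "\<Delta> \<circ> \<Delta> = \<Delta>"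
  shows "\<rho> \<in> dens (IN N) \<Longrightarrow> in_conv_hull (tensor_set N (\<Delta> ` dens UNIV)) (tpow N \<Delta> \<rho>)"
proof (induction N arbitrary: \<rho>)
  case 0
  then have "\<rho> (\<lambda>_. undefined) (\<lambda>_. undefined) = 1"
    by (simp add: dens_def trace_on_def IN_0)
  then have "tpow 0 \<Delta> \<rho> = tensor 0 (\<lambda>_. undefined)"
    by (intro ext) (simp add: tpow_def tensor_def IN_0)
  moreover have "tensor 0 (\<lambda>_. undefined) \<in> tensor_set 0 (\<Delta> ` dens UNIV)"
    by (auto simp: tensor_set_def)
  ultimately show ?case
    by (simp add: in_conv_hull_self)
next
  case (Suc N)
  obtain G :: "(nat \<times> 'a) op set" and t \<sigma> \<tau> where G: "finite G" "\<forall>g\<in>G. t g \<ge> 0" "sum t G = 1"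
    and \<sigma>: "\<forall>g\<in>G. \<sigma> g \<in> dens (IN N)" and \<tau>: "\<forall>g\<in>G. \<tau> g \<in> dens UNIV"
    and decomp: "\<And>k l. k \<in> IN N \<Longrightarrow> l \<in> IN N \<Longrightarrow>
      \<Delta> (last_block N \<rho> k l) = (\<lambda>x y. \<Sum>g\<in>G. complex_of_real (t g) * \<sigma> g k l * \<tau> g x y)"
    by (elim entanglement_breaking_last_factor[OF eb Suc.prems])
  have "\<Delta> (last_block N \<rho> k l) = (\<lambda>x y. \<Sum>g\<in>G. complex_of_real (t g) * \<sigma> g k l * \<Delta> (\<tau> g) x y)"
    if "k \<in> IN N" "l \<in> IN N" for k l
  proof -
    \<comment> \<open>Idempotence moves the last factors from D(H_A) into \<Delta>(D(H_A)).\<close>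
    have "\<Delta> (last_block N \<rho> k l) = \<Delta> (\<Delta> (last_block N \<rho> k l))"
      using idem by (simp add: fun_eq_iff)
    then show ?thesis
      using channel_sum[OF c G(1)] by (simp add: decomp[OF that])
  qed
  then have "tpow (Suc N) \<Delta> \<rho>
      = (\<lambda>i j. \<Sum>g\<in>G. complex_of_real (t g) * tensor_snoc N (tpow N \<Delta> (\<sigma> g)) (\<Delta> (\<tau> g)) i j)"
    by (rule tpow_Suc_eq_sum_tensor_snoc[OF c G(1)])
  moreover have "\<forall>g\<in>G. in_conv_hull (tensor_set (Suc N) (\<Delta> ` dens UNIV))
      (tensor_snoc N (tpow N \<Delta> (\<sigma> g)) (\<Delta> (\<tau> g)))"
    using Suc.IH \<sigma> \<tau> by (blast intro: in_conv_hull_tensor_snoc)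
  ultimately show ?case
    using in_conv_hull_convex_sum[OF G] by simp
qed

lemma tpow_fixes_tensor_set:
  fixes \<Delta> :: "'a::finite op \<Rightarrow> 'a op"
  assumes "channel \<Delta>" "\<forall>\<sigma>\<in>S. \<Delta> \<sigma> = \<sigma>" "\<tau> \<in> tensor_set N S"
  shows "tpow N \<Delta> \<tau> = \<tau>"
proof -
  obtain \<sigma>s where \<tau>: "\<tau> = tensor N \<sigma>s" and \<sigma>s: "\<forall>a<N. \<sigma>s a \<in> S"
    using assms(3) unfolding tensor_set_def by blast
  have "tensor N (\<lambda>a. \<Delta> (\<sigma>s a)) = tensor N \<sigma>s"
    unfolding tensor_def using \<sigma>s assms(2) by (intro ext if_cong prod.cong refl) auto
  then show ?thesis
    by (simp add: \<tau> tpow_tensor[OF assms(1)])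
qed

lemma RC_map_image_subset_fixed_states:
  assumes "F \<subseteq> dens UNIV" "RC_map F F' \<Delta>" "\<Delta> \<circ> \<Delta> = \<Delta>" "F' = {\<rho> \<in> dens UNIV. \<Delta> \<rho> = \<rho>}"
  shows "\<Delta> ` dens UNIV \<subseteq> F'"
proof
  fix \<sigma> assume "\<sigma> \<in> \<Delta> ` dens UNIV"
  then obtain \<rho> where "\<rho> \<in> dens UNIV" "\<sigma> = \<Delta> \<rho>" by blast
  then have "\<sigma> \<in> F" "\<Delta> \<sigma> = \<sigma>"
    using assms(2) fun_cong[OF assms(3), of \<rho>] by (simp_all add: RC_map_def)
  then show "\<sigma> \<in> F'"
    using assms(1,4) by blast
qed

theorem theorem3:
  fixes F F' :: "'a::finite op set" and \<Delta> :: "'a op \<Rightarrow> 'a op" and N :: nat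
  assumes "N \<ge> 1"
    and "F \<subseteq> dens UNIV" and "Conv UNIV F = F"
    and "F' \<subseteq> F" and "Aff UNIV F' = F'"
    and "RC_map F F' \<Delta>"
    and "\<Delta> \<circ> \<Delta> = \<Delta>"
    and "F' = {\<rho> \<in> dens UNIV. \<Delta> \<rho> = \<rho>}"
    and "entanglement_breaking \<Delta>"
  shows "\<not> (\<exists>\<rho> \<in> dens (IN N). \<rho> \<notin> Conv (IN N) (tensor_set N F) \<and> tpow N \<Delta> \<rho> = \<rho>)
       \<and> Aff (IN N) (tensor_set N F') \<subseteq> Conv (IN N) (tensor_set N F')
       \<and> Conv (IN N) (tensor_set N F') \<subseteq> Conv (IN N) (tensor_set N F)"
proof -
  have c: "channel \<Delta>"
    using assms(6) by (simp add: RC_map_def)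
  have F'_fixed: "\<forall>\<sigma>\<in>F'. \<Delta> \<sigma> = \<sigma>"
    using assms(8) by blast
  have "\<Delta> ` dens UNIV \<subseteq> F'"
    using assms(2,6,7,8) by (rule RC_map_image_subset_fixed_states)
  then have fixed_points: "\<rho> \<in> Conv (IN N) (tensor_set N F')"
    if "\<rho> \<in> dens (IN N)" "tpow N \<Delta> \<rho> = \<rho>" for \<rho>
    using in_conv_hull_mono[OF tpow_in_conv_hull_tensor_set[OF c assms(9,7) that(1)] tensor_set_mono]
    by (simp add: Conv_eq that)
  have F'_F: "Conv (IN N) (tensor_set N F') \<subseteq> Conv (IN N) (tensor_set N F)"
    using in_conv_hull_mono[OF _ tensor_set_mono[OF assms(4)]] by (auto simp: Conv_eq)
  have "Aff (IN N) (tensor_set N F') \<subseteq> Conv (IN N) (tensor_set N F')"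
  proof
    fix \<rho> assume "\<rho> \<in> Aff (IN N) (tensor_set N F')"
    then obtain G t where G: "finite G" "G \<subseteq> tensor_set N F'"
      and \<rho>: "\<rho> = lin_comb G t" "\<rho> \<in> dens (IN N)"
      unfolding Aff_def by blast
    have "\<forall>g\<in>G. tpow N \<Delta> g = g"
      using G(2) tpow_fixes_tensor_set[OF c F'_fixed] by blast
    then show "\<rho> \<in> Conv (IN N) (tensor_set N F')"
      using fixed_points \<rho> tpow_lin_comb_fixed[OF G(1)] by simp
  qed
  with fixed_points F'_F show ?thesis
    by blast
qed

end
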